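(* Let $\xi>0$, $\alpha>0$, and consider, for $\sigma\ge0$, $\rho\ge0$, $y\in\mathbb{R}$, the system \[ \begin{aligned} \dot\sigma&=\sigma(-2+\rho\sigma+\rho^2)\left(y-\tfrac{\alpha}{\xi}\right)\bigl(1+O(\rho)\bigr),\\ \dot y&=\sigma+y\rho\sigma\left(y-\tfrac{\alpha}{\xi}\right)\bigl(1+O(\rho)\bigr),\\ \dot\rho&=\rho(2-\rho\sigma)\left(y-\tfrac{\alpha}{\xi}\right)\bigl(1+O(\rho)\bigr), \end{aligned} \] where the $O(\rho)$ terms are smooth functions vanishing at $\rho=0$. Then the planes $\{\rho=0\}$ and $\{\sigma=0\}$ are invariant and their intersection $\{\rho=\sigma=0\}$ is a line of fixed points. Moreover: (i) the origin $(\sigma,y,\rho)=(0,0,0)$ has the strong stable manifold $W^s(0,0,0)=\{\sigma=0,\ y=0,\ \rho\ge0\}$; (ii) there is a heteroclinic connection $\gamma^{2,4}=\{\sigma=\tfrac{2\alpha}{\xi}y-y^2,\ y\in(0,2\alpha/\xi),\ \rho=0\}$ joining $(0,0,0)$ backwards in time with $(\sigma,y,\rho)=(0,2\alpha/\xi,0)$ forward in time; (iii) the point $(0,2\alpha/\xi,0)$ has the strong unstable manifold $W^u(0,2\alpha/\xi,0)=\{\sigma=0,\ y=2\alpha/\xi,\ \rho\ge0\}$.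
   Context: This system is the flow on the attracting center manifold $x=-1-\alpha+O(r+q)$ of the system $\dot r=r^2q(y+\frac{x+1}{\xi})$, $\dot x=-(x+1+\alpha)+xrq(y+\frac{x+1}{\xi})$, $\dot y=r+yrq(y+\frac{x+1}{\xi})$, $\dot q=q^2(2-r)(y+\frac{x+1}{\xi})$, written in the blow-up coordinates $r=\rho\sigma$, $q=\rho$ and divided by $\rho$; the plane $\rho=0$ corresponds to the blown-up line $L_0=\{r=q=0,\ x=-1-\alpha\}$. *)

theory Defs
  imports "HOL-Analysis.Analysis"
begin

primrec Ck :: "nat \<Rightarrow> ('a::real_normed_vector \<Rightarrow> real) \<Rightarrow> bool" where
  "Ck 0 f = continuous_on UNIV f"
| "Ck (Suc k) f = (\<exists>f'. (\<forall>x. (f has_derivative f' x) (at x)) \<and> (\<forall>v. Ck k (\<lambda>x. f' x v)))"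

definition smooth_fun :: "('a::real_normed_vector \<Rightarrow> real) \<Rightarrow> bool" where
  "smooth_fun f \<longleftrightarrow> (\<forall>k. Ck k f)"

text \<open>The vector field in coordinates (sigma, y, rho); h1,h2,h3 are the O(rho) terms.\<close>
definition vf :: "real \<Rightarrow> real \<Rightarrow> (real \<times> real \<times> real \<Rightarrow> real) \<Rightarrow> (real \<times> real \<times> real \<Rightarrow> real)
    \<Rightarrow> (real \<times> real \<times> real \<Rightarrow> real) \<Rightarrow> real \<times> real \<times> real \<Rightarrow> real \<times> real \<times> real" where
  "vf \<xi> \<alpha> h1 h2 h3 = (\<lambda>(s, y, r).
     ( s * (-2 + r * s + r^2) * (y - \<alpha> / \<xi>) * (1 + h1 (s, y, r)),
       s + y * r * s * (y - \<alpha> / \<xi>) * (1 + h2 (s, y, r)),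
       r * (2 - r * s) * (y - \<alpha> / \<xi>) * (1 + h3 (s, y, r)) ))"

definition Quad :: "(real \<times> real \<times> real) set" where
  "Quad = {(s, y, r). s \<ge> 0 \<and> r \<ge> 0}"

definition is_sol :: "('a::real_normed_vector \<Rightarrow> 'a) \<Rightarrow> (real \<Rightarrow> 'a) \<Rightarrow> real set \<Rightarrow> bool" where
  "is_sol f x I \<longleftrightarrow> is_interval I \<and> (\<forall>t\<in>I. (x has_vector_derivative f (x t)) (at t within I))"

definition invariant_in :: "('a::real_normed_vector \<Rightarrow> 'a) \<Rightarrow> 'a set \<Rightarrow> 'a set \<Rightarrow> bool" where
  "invariant_in f D S \<longleftrightarrow> (\<forall>x I t0 t. is_sol f x I \<and> x ` I \<subseteq> D \<and> t0 \<in> I \<and> t \<in> I \<and> x t0 \<in> S \<longrightarrow> x t \<in> S)"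

definition stable_set :: "('a::real_normed_vector \<Rightarrow> 'a) \<Rightarrow> 'a set \<Rightarrow> 'a \<Rightarrow> 'a set" where
  "stable_set f U p = {z \<in> U. \<exists>x. is_sol f x {0..} \<and> x 0 = z \<and> (\<forall>t\<ge>0. x t \<in> U) \<and> (x \<longlongrightarrow> p) at_top}"

definition unstable_set :: "('a::real_normed_vector \<Rightarrow> 'a) \<Rightarrow> 'a set \<Rightarrow> 'a \<Rightarrow> 'a set" where
  "unstable_set f U p = {z \<in> U. \<exists>x. is_sol f x {..0} \<and> x 0 = z \<and> (\<forall>t\<le>0. x t \<in> U) \<and> (x \<longlongrightarrow> p) at_bot}"

end

theory Submission
  imports Defs "HOL-Real_Asymp.Real_Asymp"
begin

text \<open>
  The \<open>\<sigma>\<close>- and \<open>\<rho>\<close>-components of the field are \<open>\<sigma>\<close> and \<open>\<rho>\<close> times continuous factors, so along a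
  solution each of them satisfies a linear scalar equation \<open>p' = k(t) p\<close>, and a zero of \<open>p\<close> persists:
  the planes \<open>\<sigma> = 0\<close> and \<open>\<rho> = 0\<close> are invariant.

  Near the origin \<open>y < \<alpha>/\<xi>\<close>, so \<open>\<sigma>' \<ge> 0\<close> in the quadrant; a solution converging to the origin
  therefore has \<open>\<sigma> \<equiv> 0\<close>, hence \<open>y' \<equiv> 0\<close> and \<open>y \<equiv> 0\<close>. Conversely, on the \<open>\<rho>\<close>-axis
  \<open>\<rho>' = -2(\<alpha>/\<xi>) \<rho> (1 + O(\<rho>))\<close>, which separation of variables solves by a decaying solution.
  Reversing time, the same argument applies at \<open>(0, 2\<alpha>/\<xi>, 0)\<close>, where \<open>y > \<alpha>/\<xi>\<close>.

  On \<open>\<rho> = 0\<close> the system reduces to \<open>\<sigma>' = -2\<sigma>(y - \<alpha>/\<xi>)\<close>, \<open>y' = \<sigma>\<close>, which preserves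
  \<open>\<sigma> = (2\<alpha>/\<xi>) y - y\<^sup>2\<close>; along this curve \<open>y\<close> solves the logistic equation \<open>y' = y (2\<alpha>/\<xi> - y)\<close>.
\<close>

lemma DERIV_within_nonneg_imp_le:
  fixes g g' :: "real \<Rightarrow> real"
  assumes "a \<le> b"
    and deriv: "\<And>x. x \<in> {a..b} \<Longrightarrow> (g has_real_derivative g' x) (at x within {a..b})"
    and nonneg: "\<And>x. x \<in> {a..b} \<Longrightarrow> g' x \<ge> 0"
  shows "g a \<le> g b"
proof (rule DERIV_nonneg_imp_increasing_open[OF \<open>a \<le> b\<close>])
  fix x assume x: "a < x" "x < b"
  then have "(g has_real_derivative g' x) (at x)"
    using deriv[of x] at_within_Icc_at[OF x] by simp
  then show "\<exists>y. (g has_real_derivative y) (at x) \<and> 0 \<le> y"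
    using nonneg[of x] x by auto
qed (use DERIV_continuous_on[of "{a..b}" g g'] deriv in blast)

lemma linear_ode_zero_forward:
  fixes p k :: "real \<Rightarrow> real"
  assumes "a \<le> t"
    and deriv: "\<And>\<tau>. \<tau> \<in> {a..t} \<Longrightarrow> (p has_real_derivative p \<tau> * k \<tau>) (at \<tau> within {a..t})"
    and bound: "\<And>\<tau>. \<tau> \<in> {a..t} \<Longrightarrow> k \<tau> \<le> M" and "p a = 0"
  shows "p t = 0"
proof -
  define w where "w \<tau> = - (p \<tau>^2 * exp (-2*M*\<tau>))" for \<tau>
  have "w a \<le> w t"
  proof (rule DERIV_within_nonneg_imp_le[OF \<open>a \<le> t\<close>])
    fix \<tau> assume \<tau>: "\<tau> \<in> {a..t}"
    show "(w has_real_derivative 2 * p \<tau>^2 * exp (-2*M*\<tau>) * (M - k \<tau>)) (at \<tau> within {a..t})"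
      unfolding w_def by (auto intro!: derivative_eq_intros deriv[OF \<tau>] simp: algebra_simps power2_eq_square)
    show "0 \<le> 2 * p \<tau>^2 * exp (-2*M*\<tau>) * (M - k \<tau>)"
      using bound[OF \<tau>] by simp
  qed
  then show ?thesis using \<open>p a = 0\<close> by (simp add: w_def mult_le_0_iff)
qed

lemma linear_ode_zero_backward:
  fixes p k :: "real \<Rightarrow> real"
  assumes "t \<le> a"
    and deriv: "\<And>\<tau>. \<tau> \<in> {t..a} \<Longrightarrow> (p has_real_derivative p \<tau> * k \<tau>) (at \<tau> within {t..a})"
    and bound: "\<And>\<tau>. \<tau> \<in> {t..a} \<Longrightarrow> - M \<le> k \<tau>" and "p a = 0"
  shows "p t = 0"
proof -
  define w where "w \<tau> = p \<tau>^2 * exp (2*M*\<tau>)" for \<tau>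
  have "w t \<le> w a"
  proof (rule DERIV_within_nonneg_imp_le[OF \<open>t \<le> a\<close>])
    fix \<tau> assume \<tau>: "\<tau> \<in> {t..a}"
    show "(w has_real_derivative 2 * p \<tau>^2 * exp (2*M*\<tau>) * (k \<tau> + M)) (at \<tau> within {t..a})"
      unfolding w_def by (auto intro!: derivative_eq_intros deriv[OF \<tau>] simp: algebra_simps power2_eq_square)
    show "0 \<le> 2 * p \<tau>^2 * exp (2*M*\<tau>) * (k \<tau> + M)"
      using bound[OF \<tau>] by simp
  qed
  then show ?thesis using \<open>p a = 0\<close> by (simp add: w_def mult_le_0_iff)
qed

lemma linear_ode_zero_persists:
  fixes p k :: "real \<Rightarrow> real"
  assumes I: "is_interval I"
    and deriv: "\<And>t. t \<in> I \<Longrightarrow> (p has_real_derivative p t * k t) (at t within I)"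
    and "continuous_on I k" and "a \<in> I" and "t \<in> I" and "p a = 0"
  shows "p t = 0"
proof -
  define J where "J = {min a t..max a t}"
  have "min a t \<in> I" "max a t \<in> I"
    using \<open>a \<in> I\<close> \<open>t \<in> I\<close> by (simp_all add: min_def max_def)
  then have "J \<subseteq> I"
    unfolding J_def by (meson atLeastAtMost_iff mem_is_interval_1_I[OF I] subsetI)
  then have "compact (k ` J)"
    unfolding J_def by (intro compact_continuous_image continuous_on_subset[OF \<open>continuous_on I k\<close>] compact_Icc)
  then have "bounded (k ` J)"
    by (rule compact_imp_bounded)
  then obtain M where M: "\<And>\<tau>. \<tau> \<in> J \<Longrightarrow> \<bar>k \<tau>\<bar> \<le> M"
    unfolding bounded_real by auto
  have deriv_J: "(p has_real_derivative p \<tau> * k \<tau>) (at \<tau> within K)" if "K \<subseteq> J" "\<tau> \<in> K" for K \<tau>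
    using DERIV_subset[OF deriv] that \<open>J \<subseteq> I\<close> by blast
  show ?thesis
  proof (cases "a \<le> t")
    case True
    then have "{a..t} \<subseteq> J" by (simp add: J_def)
    then show ?thesis
      using linear_ode_zero_forward[OF True deriv_J, of M] M \<open>p a = 0\<close> by (meson abs_le_D1 subsetD)
  next
    case False
    then have "t \<le> a" "{t..a} \<subseteq> J" by (simp_all add: J_def)
    then show ?thesis
      using linear_ode_zero_backward[OF \<open>t \<le> a\<close> deriv_J, of M] M \<open>p a = 0\<close>
      by (meson abs_le_D2 minus_le_iff subsetD)
  qed
qed

lemma tail_integral_has_real_derivative:
  fixes \<phi> :: "real \<Rightarrow> real"
  assumes "continuous_on UNIV \<phi>" and "u \<in> {a..B}"
  shows "((\<lambda>u. integral {u..B} \<phi>) has_real_derivative - \<phi> u) (at u within {a..B})"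
  using assms by (intro integral_has_real_derivative' continuous_on_subset[OF assms(1)]) auto

lemma tail_integral_decrease:
  fixes \<phi> :: "real \<Rightarrow> real"
  assumes cont: "continuous_on UNIV \<phi>" and lower: "\<And>v. l \<le> \<phi> v" and "u \<le> v" "v \<le> B"
  shows "l * (v - u) \<le> integral {u..B} \<phi> - integral {v..B} \<phi>"
proof -
  have "integral {u..B} \<phi> - integral {v..B} \<phi> = integral {u..v} \<phi>"
    using Henstock_Kurzweil_Integration.integral_combine[OF \<open>u \<le> v\<close> \<open>v \<le> B\<close>
        integrable_continuous_real[OF continuous_on_subset[OF cont]]]
    by simp
  moreover have "integral {u..v} (\<lambda>_. l) \<le> integral {u..v} \<phi>"
    by (intro integral_le integrable_continuous_real continuous_on_subset[OF cont]) (auto intro: lower)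
  ultimately show ?thesis
    using \<open>u \<le> v\<close> by (simp add: mult.commute)
qed

lemma tail_integral_bij_betw:
  fixes \<phi> :: "real \<Rightarrow> real"
  assumes cont: "continuous_on UNIV \<phi>" and "0 < l" and lower: "\<And>v. l \<le> \<phi> v"
  shows "bij_betw (\<lambda>u. integral {u..B} \<phi>) {..B} {0..}"
proof (rule bij_betw_imageI)
  let ?K = "\<lambda>u. integral {u..B} \<phi>"
  have strict: "?K v < ?K u" if "u < v" "v \<le> B" for u v
  proof -
    have "0 < l * (v - u)"
      using that \<open>0 < l\<close> by simp
    then show ?thesis
      using tail_integral_decrease[OF cont lower, of u v B] that by linarith
  qed
  show "inj_on ?K {..B}"
    by (rule linorder_inj_onI') (use strict in force)
  show "?K ` {..B} = {0..}"
  proof (intro antisym subsetI)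
    fix s assume "s \<in> ?K ` {..B}"
    then show "s \<in> {0..}"
      using strict[of _ B] by (cases "s = 0") (auto simp: le_less)
  next
    fix s :: real assume "s \<in> {0..}"
    define a where "a = B - s / l"
    have "a \<le> B" "s \<le> ?K a"
      using tail_integral_decrease[OF cont lower, of a B B] \<open>s \<in> {0..}\<close> \<open>0 < l\<close> by (simp_all add: a_def)
    moreover have "continuous_on {a..B} ?K"
      by (rule DERIV_continuous_on[OF tail_integral_has_real_derivative[OF cont]])
    ultimately obtain u where "a \<le> u" "u \<le> B" "?K u = s"
      using IVT2'[of ?K B s a] \<open>s \<in> {0..}\<close> by auto
    then show "s \<in> ?K ` {..B}"
      by force
  qed
qed

lemma DERIV_inverse_function_halfline:
  fixes K L K' :: "real \<Rightarrow> real"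
  assumes K_deriv: "\<And>u. u < B \<Longrightarrow> (K has_real_derivative K' u) (at u)" and "\<And>u. u < B \<Longrightarrow> K' u \<noteq> 0"
    and LK: "\<And>s. 0 < s \<Longrightarrow> L s < B \<and> K (L s) = s" and KL: "\<And>u. u < B \<Longrightarrow> L (K u) = u"
    and "0 < s"
  shows "(L has_real_derivative inverse (K' (L s))) (at s)"
proof (rule DERIV_inverse_function[where a = 0 and b = "s + 1"])
  define d where "d = (B - L s) / 2"
  have "0 < d"
    using LK[OF \<open>0 < s\<close>] by (simp add: d_def)
  have near: "z < B" if "\<bar>z - L s\<bar> \<le> d" for z
    using that LK[OF \<open>0 < s\<close>] unfolding d_def by argo
  have "isCont L (K (L s))"
  proof (rule isCont_inverse_function[where f = K and x = "L s", OF \<open>0 < d\<close>])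
    show "L (K z) = z" if "\<bar>z - L s\<bar> \<le> d" for z
      using KL near[OF that] by simp
    show "isCont K z" if "\<bar>z - L s\<bar> \<le> d" for z
      using DERIV_isCont[OF K_deriv[OF near[OF that]]] .
  qed
  then show "isCont L s"
    using LK[OF \<open>0 < s\<close>] by simp
qed (use assms in auto)

lemma tail_integral_inverse:
  fixes \<phi> :: "real \<Rightarrow> real" and B l :: real
  assumes cont: "continuous_on UNIV \<phi>" and "0 < l" and lower: "\<And>v. l \<le> \<phi> v"
  obtains L where "\<And>u. u \<le> B \<Longrightarrow> L (integral {u..B} \<phi>) = u"
    and "\<And>s. 0 < s \<Longrightarrow> (L has_real_derivative - 1 / \<phi> (L s)) (at s)"
proof
  define K where "K u = integral {u..B} \<phi>" for u
  define L where "L = the_inv_into {..B} K"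
  have bij: "bij_betw K {..B} {0..}"
    unfolding K_def[abs_def] by (rule tail_integral_bij_betw[OF cont \<open>0 < l\<close> lower])
  have KL: "L (K u) = u" if "u \<le> B" for u
    using the_inv_into_f_f[OF bij_betw_imp_inj_on[OF bij]] that by (simp add: L_def)
  have LK: "L s < B \<and> K (L s) = s" if "0 < s" for s
  proof -
    have "K (L s) = s"
      using f_the_inv_into_f_bij_betw[OF bij] that by (simp add: L_def)
    moreover have "L s \<le> B"
      using the_inv_into_into[OF bij_betw_imp_inj_on[OF bij], of s "{..B}"] bij that
      by (simp add: L_def bij_betw_def)
    ultimately show ?thesis
      using that by (cases "L s = B") (auto simp: K_def)
  qed
  have K_deriv: "(K has_real_derivative - \<phi> u) (at u)" if "u < B" for u
    using tail_integral_has_real_derivative[OF cont, of u "u - 1" B] at_within_Icc_at[of "u - 1" u B] that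
    by (simp add: K_def[abs_def])
  have "- \<phi> u \<noteq> 0" for u
    using lower[of u] \<open>0 < l\<close> by simp
  then show "(L has_real_derivative - 1 / \<phi> (L s)) (at s)" if "0 < s" for s
    using DERIV_inverse_function_halfline[OF K_deriv _ LK KL that] by (simp add: divide_inverse)
  show "L (integral {u..B} \<phi>) = u" if "u \<le> B" for u
    using KL[OF that] by (simp add: K_def)
qed

lemma negative_autonomous_ode_solution:
  fixes F :: "real \<Rightarrow> real"
  assumes cont: "continuous_on UNIV F" and bounds: "\<And>v. - M \<le> F v \<and> F v < 0"
  obtains u where "u 0 = a" and "\<And>t. 0 \<le> t \<Longrightarrow> (u has_real_derivative F (u t)) (at t)"
proof -
  \<comment> \<open>Separation of variables: the solution inverts the travel time
    \<open>v \<mapsto> integral {v..a + 1} (\<lambda>w. - 1 / F w)\<close>, shifted so that \<open>u 0 = a\<close>.\<close>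
  define \<phi> where "\<phi> v = - 1 / F v" for v
  have "0 < M"
    using bounds[of 0] by linarith
  have \<phi>_lower: "1 / M \<le> \<phi> v" for v
    using bounds[of v] \<open>0 < M\<close> by (simp add: \<phi>_def field_simps)
  have \<phi>_cont: "continuous_on UNIV \<phi>"
    unfolding \<phi>_def using bounds by (intro continuous_intros cont) (metis less_irrefl)
  obtain L where L_K: "\<And>u. u \<le> a + 1 \<Longrightarrow> L (integral {u..a + 1} \<phi>) = u"
    and L_deriv: "\<And>s. 0 < s \<Longrightarrow> (L has_real_derivative - 1 / \<phi> (L s)) (at s)"
    by (rule tail_integral_inverse[OF \<phi>_cont, of "1 / M"]) (use \<phi>_lower \<open>0 < M\<close> in auto)
  define T0 where "T0 = integral {a..a + 1} \<phi>"
  have "0 < T0"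
    using tail_integral_decrease[OF \<phi>_cont \<phi>_lower, of a "a + 1" "a + 1"] \<open>0 < M\<close>
    unfolding T0_def by (simp add: order_less_le_trans[of 0 "1 / M"])
  show ?thesis
  proof (rule that[of "\<lambda>t. L (T0 + t)"])
    show "L (T0 + 0) = a"
      using L_K[of a] by (simp add: T0_def)
    fix t :: real assume "0 \<le> t"
    have "((\<lambda>t. L (T0 + t)) has_real_derivative - 1 / \<phi> (L (T0 + t)) * (0 + 1)) (at t)"
      by (rule DERIV_chain2[OF L_deriv]) (use \<open>0 < T0\<close> \<open>0 \<le> t\<close> in \<open>auto intro!: derivative_eq_intros\<close>)
    then show "((\<lambda>t. L (T0 + t)) has_real_derivative F (L (T0 + t))) (at t)"
      by (simp add: \<phi>_def)
  qed
qed

lemma DERIV_le_imp_linear_bound: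
  fixes u u' :: "real \<Rightarrow> real"
  assumes deriv: "\<And>t. 0 \<le> t \<Longrightarrow> (u has_real_derivative u' t) (at t)"
    and bound: "\<And>t. 0 \<le> t \<Longrightarrow> u' t \<le> - k" and "0 \<le> t"
  shows "u t \<le> u 0 - k * t"
proof -
  have "u 0 - k * 0 - u 0 \<le> u 0 - k * t - u t"
  proof (rule DERIV_within_nonneg_imp_le[OF \<open>0 \<le> t\<close>])
    fix \<tau> assume "\<tau> \<in> {0..t}"
    then show "((\<lambda>t. u 0 - k * t - u t) has_real_derivative - k - u' \<tau>) (at \<tau> within {0..t})"
      by (auto intro!: derivative_eq_intros DERIV_subset[OF deriv])
    show "0 \<le> - k - u' \<tau>"
      using bound[of \<tau>] \<open>\<tau> \<in> {0..t}\<close> by simp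
  qed
  then show ?thesis by simp
qed

lemma decaying_scalar_ode_solution:
  fixes g :: "real \<Rightarrow> real" and c r0 m M :: real
  assumes "0 < c" and "0 < r0" and "0 < m" and g_cont: "continuous_on {0<..r0} g"
    and g_bounds: "\<And>\<rho>. 0 < \<rho> \<Longrightarrow> \<rho> \<le> r0 \<Longrightarrow> m \<le> g \<rho> \<and> g \<rho> \<le> M"
  obtains \<rho> where "\<rho> 0 = r0" and "\<And>t. 0 \<le> t \<Longrightarrow> 0 < \<rho> t \<and> \<rho> t \<le> r0"
    and "\<And>t. 0 \<le> t \<Longrightarrow> (\<rho> has_real_derivative - c * \<rho> t * g (\<rho> t)) (at t)"
    and "(\<rho> \<longlongrightarrow> 0) at_top"
proof -
  \<comment> \<open>For \<open>u = ln \<rho>\<close> the equation reads \<open>u' = - c g(e\<^sup>u)\<close>; clamping \<open>u\<close> at \<open>ln r0\<close> makes the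
    right-hand side defined and bounded on all of \<open>\<real>\<close>.\<close>
  define u0 where "u0 = ln r0"
  define F where "F v = - c * g (exp (min v u0))" for v
  have clamp: "0 < exp (min v u0) \<and> exp (min v u0) \<le> r0" for v
    using \<open>0 < r0\<close> exp_le_cancel_iff[of "min v u0" u0] by (simp add: u0_def)
  have F_bounds: "- (c * M) \<le> F v \<and> F v \<le> - (c * m)" for v
    using g_bounds[of "exp (min v u0)"] clamp[of v] \<open>0 < c\<close> by (simp add: F_def)
  have "continuous_on UNIV F"
    unfolding F_def
    by (intro continuous_intros continuous_on_compose2[OF g_cont]) (use clamp in auto)
  moreover have "- (c * M) \<le> F v \<and> F v < 0" for v
    using F_bounds[of v] mult_pos_pos[OF \<open>0 < c\<close> \<open>0 < m\<close>] by linarith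
  ultimately obtain u where "u 0 = u0" and u_deriv: "\<And>t. 0 \<le> t \<Longrightarrow> (u has_real_derivative F (u t)) (at t)"
    using negative_autonomous_ode_solution[where a = u0] by blast
  have decay: "u t \<le> u0 - c * m * t" if "0 \<le> t" for t
    using DERIV_le_imp_linear_bound[OF u_deriv _ that, of "c * m"] F_bounds \<open>u 0 = u0\<close> by simp
  show ?thesis
  proof (rule that[of "\<lambda>t. exp (u t)"])
    show "exp (u 0) = r0"
      using \<open>u 0 = u0\<close> \<open>0 < r0\<close> by (simp add: u0_def)
    fix t :: real assume "0 \<le> t"
    have "0 \<le> c * m * t"
      using \<open>0 < c\<close> \<open>0 < m\<close> \<open>0 \<le> t\<close> by simp
    then have "u t \<le> u0"
      using decay[OF \<open>0 \<le> t\<close>] by linarith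
    then show "0 < exp (u t) \<and> exp (u t) \<le> r0"
      using \<open>0 < r0\<close> by (simp add: u0_def ln_ge_iff)
    have "F (u t) = - c * g (exp (u t))"
      using \<open>u t \<le> u0\<close> by (simp add: F_def)
    then show "((\<lambda>t. exp (u t)) has_real_derivative - c * exp (u t) * g (exp (u t))) (at t)"
      using DERIV_fun_exp[OF u_deriv[OF \<open>0 \<le> t\<close>]] by (simp add: mult_ac)
  next
    have upper: "\<forall>\<^sub>F t in at_top. exp (u t) \<le> exp (u0 - c * m * t)"
      using eventually_ge_at_top[of 0] by eventually_elim (use decay in simp)
    have lim: "((\<lambda>t. exp (u0 - c * m * t)) \<longlongrightarrow> 0) at_top"
      using \<open>0 < c\<close> \<open>0 < m\<close> by real_asymp
    show "((\<lambda>t. exp (u t)) \<longlongrightarrow> 0) at_top"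
      by (rule tendsto_sandwich[OF _ upper tendsto_const lim]) simp
  qed
qed

lemma is_sol_reflect:
  assumes "is_sol f x S"
  shows "is_sol (\<lambda>z. - f z) (\<lambda>t. x (- t)) (uminus ` S)"
  unfolding is_sol_def
proof (intro conjI ballI)
  show "is_interval (uminus ` S)"
    using assms by (simp add: is_sol_def)
  fix t assume "t \<in> uminus ` S"
  then have "- t \<in> S" by force
  then have "(x has_vector_derivative f (x (- t))) (at (- t) within uminus ` uminus ` S)"
    using assms by (simp add: is_sol_def image_image)
  then have "((x \<circ> uminus) has_vector_derivative (- 1) *\<^sub>R f (x (- t))) (at t within uminus ` S)"
    by (intro vector_diff_chain_within) (auto intro!: derivative_eq_intros)
  then show "((\<lambda>t. x (- t)) has_vector_derivative - f (x (- t))) (at t within uminus ` S)"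
    by (simp add: o_def)
qed

lemma unstable_set_eq_stable_set_reflect:
  "unstable_set f U p = stable_set (\<lambda>z. - f z) U p"
proof (intro set_eqI iffI)
  fix z assume "z \<in> unstable_set f U p"
  then obtain x where "is_sol f x {..0}" "x 0 = z" "\<forall>t\<le>0. x t \<in> U" "(x \<longlongrightarrow> p) at_bot" "z \<in> U"
    by (auto simp: unstable_set_def)
  moreover have "((\<lambda>t. x (- t)) \<longlongrightarrow> p) at_top"
    using filterlim_compose[OF \<open>(x \<longlongrightarrow> p) at_bot\<close> filterlim_uminus_at_bot_at_top] .
  ultimately show "z \<in> stable_set (\<lambda>z. - f z) U p"
    unfolding stable_set_def using is_sol_reflect[of f x "{..0}"]
    by (intro CollectI conjI exI[of _ "\<lambda>t. x (- t)"]) auto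
next
  fix z assume "z \<in> stable_set (\<lambda>z. - f z) U p"
  then obtain x where "is_sol (\<lambda>z. - f z) x {0..}" "x 0 = z" "\<forall>t\<ge>0. x t \<in> U" "(x \<longlongrightarrow> p) at_top" "z \<in> U"
    by (auto simp: stable_set_def)
  moreover have "((\<lambda>t. x (- t)) \<longlongrightarrow> p) at_bot"
    using filterlim_compose[OF \<open>(x \<longlongrightarrow> p) at_top\<close> filterlim_uminus_at_top_at_bot] .
  ultimately show "z \<in> unstable_set f U p"
    unfolding unstable_set_def using is_sol_reflect[of "\<lambda>z. - f z" x "{0..}"]
    by (intro CollectI conjI exI[of _ "\<lambda>t. x (- t)"]) auto
qed

lemma DERIV_nonneg_tendsto_imp_le:
  fixes g g' :: "real \<Rightarrow> real"
  assumes deriv: "\<And>t. 0 \<le> t \<Longrightarrow> (g has_real_derivative g' t) (at t within {0..})"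
    and nonneg: "\<And>t. 0 \<le> t \<Longrightarrow> 0 \<le> g' t" and lim: "(g \<longlongrightarrow> l) at_top" and "0 \<le> t"
  shows "g t \<le> l"
proof -
  have mono: "g t \<le> g v" if "t \<le> v" for v
  proof (rule DERIV_within_nonneg_imp_le[OF that])
    fix \<tau> assume "\<tau> \<in> {t..v}"
    then show "(g has_real_derivative g' \<tau>) (at \<tau> within {t..v})"
      using \<open>0 \<le> t\<close> by (intro DERIV_subset[OF deriv]) auto
    show "0 \<le> g' \<tau>"
      using \<open>\<tau> \<in> {t..v}\<close> \<open>0 \<le> t\<close> nonneg by simp
  qed
  have "\<forall>\<^sub>F v in at_top. g t \<le> g v"
    using eventually_ge_at_top[of t] by eventually_elim (rule mono)
  then show ?thesis
    by (rule tendsto_lowerbound[OF lim]) simp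
qed

lemma stable_set_subset_ray:
  fixes f :: "real \<times> real \<times> real \<Rightarrow> real \<times> real \<times> real"
  assumes "U \<subseteq> Quad"
    and sigma_nondecreasing: "\<And>s y r. (s, y, r) \<in> U \<Longrightarrow> 0 \<le> fst (f (s, y, r))"
    and y_at_rest: "\<And>y r. (0, y, r) \<in> U \<Longrightarrow> fst (snd (f (0, y, r))) = 0"
  shows "stable_set f U (0, y0, 0) \<subseteq> {(0, y0, r) | r. 0 \<le> r} \<inter> U"
proof
  fix z assume "z \<in> stable_set f U (0, y0, 0)"
  then obtain x where sol: "is_sol f x {0..}" and "x 0 = z" and x_U: "\<And>t. 0 \<le> t \<Longrightarrow> x t \<in> U"
    and lim: "(x \<longlongrightarrow> (0, y0, 0)) at_top"
    by (auto simp: stable_set_def)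
  \<comment> \<open>\<open>\<sigma>\<close> is nondecreasing, nonnegative and tends to \<open>0\<close>, so it vanishes; then \<open>y\<close> is constant.\<close>
  define S where "S = (\<lambda>t. fst (x t))"
  define Y where "Y = (\<lambda>t. fst (snd (x t)))"
  have x_eq: "x t = (S t, Y t, snd (snd (x t)))" for t
    by (simp add: S_def Y_def)
  have x_deriv: "(x has_vector_derivative f (x t)) (at t within {0..})" if "0 \<le> t" for t
    using sol that by (simp add: is_sol_def)
  have S_zero: "S t = 0" if "0 \<le> t" for t
  proof (rule antisym)
    show "S t \<le> 0"
    proof (rule DERIV_nonneg_tendsto_imp_le[OF _ _ _ that])
      show "(S has_real_derivative fst (f (x t))) (at t within {0..})" if "0 \<le> t" for t
        using bounded_linear.has_vector_derivative[OF bounded_linear_fst x_deriv[OF that]]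
        by (simp add: S_def has_real_derivative_iff_has_vector_derivative)
      show "0 \<le> fst (f (x t))" if "0 \<le> t" for t
        using sigma_nondecreasing x_U[OF that] x_eq[of t] by metis
      show "(S \<longlongrightarrow> 0) at_top"
        using tendsto_fst[OF lim] by (simp add: S_def)
    qed
    show "0 \<le> S t"
      using x_U[OF that] \<open>U \<subseteq> Quad\<close> by (auto simp: S_def Quad_def split: prod.splits)
  qed
  have Y_deriv: "(Y has_real_derivative 0) (at t within {0..})" if "0 \<le> t" for t
  proof -
    have "fst (snd (f (x t))) = 0"
      using y_at_rest x_U[OF that] x_eq[of t] S_zero[OF that] by metis
    then show ?thesis
      using bounded_linear.has_vector_derivative[OF bounded_linear_fst_comp[OF bounded_linear_snd] x_deriv[OF that]]
      by (simp add: Y_def has_real_derivative_iff_has_vector_derivative)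
  qed
  have Y_lim: "(Y \<longlongrightarrow> y0) at_top"
    using tendsto_fst[OF tendsto_snd[OF lim]] by (simp add: Y_def)
  have "Y 0 \<le> y0"
    by (rule DERIV_nonneg_tendsto_imp_le[OF Y_deriv _ Y_lim]) simp_all
  moreover have "- Y 0 \<le> - y0"
    by (rule DERIV_nonneg_tendsto_imp_le[OF DERIV_minus[OF Y_deriv] _ tendsto_minus[OF Y_lim]]) simp_all
  ultimately show "z \<in> {(0, y0, r) | r. 0 \<le> r} \<inter> U"
    using x_eq[of 0] S_zero[of 0] x_U[of 0] \<open>x 0 = z\<close> \<open>U \<subseteq> Quad\<close> by (auto simp: Quad_def)
qed

lemma axis_point_in_stable_set:
  fixes f :: "real \<times> real \<times> real \<Rightarrow> real \<times> real \<times> real" and g :: "real \<Rightarrow> real"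
  assumes "convex V" and "(0, y0, 0) \<in> V" and "(0, y0, r0) \<in> V" and "0 < r0" and "0 < c" and "0 < m"
    and g_cont: "continuous_on {0<..} g"
    and g_bounds: "\<And>r. (0, y0, r) \<in> V \<Longrightarrow> 0 < r \<Longrightarrow> m \<le> g r \<and> g r \<le> M"
    and on_axis: "\<And>r. (0, y0, r) \<in> V \<Longrightarrow> 0 \<le> r \<Longrightarrow> f (0, y0, r) = (0, 0, - c * r * g r)"
  shows "(0, y0, r0) \<in> stable_set f (V \<inter> Quad) (0, y0, 0)"
proof -
  have segment: "(0, y0, \<rho>) \<in> V" if "0 \<le> \<rho>" "\<rho> \<le> r0" for \<rho>
  proof -
    have "(1 - \<rho> / r0) *\<^sub>R (0, y0, 0) + (\<rho> / r0) *\<^sub>R (0, y0, r0) \<in> V"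
      using that \<open>0 < r0\<close> \<open>(0, y0, r0) \<in> V\<close>
      by (intro convexD[OF \<open>convex V\<close> \<open>(0, y0, 0) \<in> V\<close>]) auto
    then show ?thesis
      using \<open>0 < r0\<close> by (simp add: algebra_simps)
  qed
  obtain \<rho> where "\<rho> 0 = r0" and \<rho>_range: "\<And>t. 0 \<le> t \<Longrightarrow> 0 < \<rho> t \<and> \<rho> t \<le> r0"
    and \<rho>_deriv: "\<And>t. 0 \<le> t \<Longrightarrow> (\<rho> has_real_derivative - c * \<rho> t * g (\<rho> t)) (at t)"
    and "(\<rho> \<longlongrightarrow> 0) at_top"
    using decaying_scalar_ode_solution[OF \<open>0 < c\<close> \<open>0 < r0\<close> \<open>0 < m\<close>, of g M]
      continuous_on_subset[OF g_cont, of "{0<..r0}"] g_bounds segment by force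
  define x where "x t = (0 :: real, y0, \<rho> t)" for t
  have "is_sol f x {0..}"
    unfolding is_sol_def
  proof (intro conjI ballI)
    fix t :: real assume "t \<in> {0..}"
    then have "0 \<le> t" by simp
    have "(x has_vector_derivative (0, 0, - c * \<rho> t * g (\<rho> t))) (at t)"
      unfolding x_def using \<rho>_deriv[OF \<open>0 \<le> t\<close>]
      by (intro has_vector_derivative_Pair has_vector_derivative_const)
        (simp add: has_real_derivative_iff_has_vector_derivative)
    moreover have "f (x t) = (0, 0, - c * \<rho> t * g (\<rho> t))"
      using on_axis segment \<rho>_range[OF \<open>0 \<le> t\<close>] by (simp add: x_def)
    ultimately show "(x has_vector_derivative f (x t)) (at t within {0..})"
      by (simp add: has_vector_derivative_at_within)
  qed (simp add: is_interval_ci)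
  moreover have "(x \<longlongrightarrow> (0, y0, 0)) at_top"
    unfolding x_def by (intro tendsto_intros \<open>(\<rho> \<longlongrightarrow> 0) at_top\<close>)
  moreover have "x t \<in> V \<inter> Quad" if "0 \<le> t" for t
    using segment \<rho>_range[OF that] by (simp add: x_def Quad_def)
  ultimately show ?thesis
    using \<open>\<rho> 0 = r0\<close> \<open>(0, y0, r0) \<in> V\<close> \<open>0 < r0\<close> by (auto simp: stable_set_def x_def Quad_def)
qed

lemma ray_subset_stable_set:
  fixes f :: "real \<times> real \<times> real \<Rightarrow> real \<times> real \<times> real" and g :: "real \<Rightarrow> real"
  assumes "convex V" and "(0, y0, 0) \<in> V" and "0 < c" and "0 < m"
    and g_cont: "continuous_on {0<..} g"
    and g_bounds: "\<And>r. (0, y0, r) \<in> V \<Longrightarrow> 0 < r \<Longrightarrow> m \<le> g r \<and> g r \<le> M"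
    and on_axis: "\<And>r. (0, y0, r) \<in> V \<Longrightarrow> 0 \<le> r \<Longrightarrow> f (0, y0, r) = (0, 0, - c * r * g r)"
  shows "{(0, y0, r) | r. 0 \<le> r} \<inter> V \<subseteq> stable_set f (V \<inter> Quad) (0, y0, 0)"
proof
  fix z assume "z \<in> {(0, y0, r) | r. 0 \<le> r} \<inter> V"
  then obtain r0 where z: "z = (0, y0, r0)" and "0 \<le> r0" and "(0, y0, r0) \<in> V"
    by auto
  show "z \<in> stable_set f (V \<inter> Quad) (0, y0, 0)"
  proof (cases "r0 = 0")
    case True
    have "is_sol f (\<lambda>_. (0, y0, 0)) {0..}"
      using on_axis[of 0] \<open>(0, y0, 0) \<in> V\<close> by (simp add: is_sol_def zero_prod_def[symmetric])
    then show ?thesis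
      using True z \<open>(0, y0, 0) \<in> V\<close> by (auto simp: stable_set_def Quad_def)
  next
    case False
    then show ?thesis
      using axis_point_in_stable_set[OF assms(1,2) \<open>(0, y0, r0) \<in> V\<close> _ assms(3,4) g_cont g_bounds on_axis]
        \<open>0 \<le> r0\<close> z by simp
  qed
qed

lemma invariant_in_zero_set:
  fixes f :: "'a::real_normed_vector \<Rightarrow> 'a" and \<phi> k :: "'a \<Rightarrow> real"
  assumes "bounded_linear \<phi>" and k_cont: "continuous_on UNIV k"
    and factor: "\<And>z. \<phi> (f z) = \<phi> z * k z"
  shows "invariant_in f D {z. \<phi> z = 0}"
  unfolding invariant_in_def
proof (intro allI impI, elim conjE)
  fix x I t0 t assume sol: "is_sol f x I" and "t0 \<in> I" "t \<in> I" and "x t0 \<in> {z. \<phi> z = 0}"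
  have x_deriv: "(x has_vector_derivative f (x \<tau>)) (at \<tau> within I)" if "\<tau> \<in> I" for \<tau>
    using sol that by (simp add: is_sol_def)
  have "continuous_on I x"
    unfolding continuous_on_eq_continuous_within using x_deriv has_vector_derivative_continuous by blast
  have "\<phi> (x t) = 0"
  proof (rule linear_ode_zero_persists[where p = "\<lambda>\<tau>. \<phi> (x \<tau>)" and k = "\<lambda>\<tau>. k (x \<tau>)" and a = t0])
    show "is_interval I"
      using sol by (simp add: is_sol_def)
    show "((\<lambda>\<tau>. \<phi> (x \<tau>)) has_real_derivative \<phi> (x \<tau>) * k (x \<tau>)) (at \<tau> within I)" if "\<tau> \<in> I" for \<tau>
      using bounded_linear.has_vector_derivative[OF \<open>bounded_linear \<phi>\<close> x_deriv[OF that]]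
      by (simp add: has_real_derivative_iff_has_vector_derivative factor)
    show "continuous_on I (\<lambda>\<tau>. k (x \<tau>))"
      using continuous_on_compose2[OF k_cont \<open>continuous_on I x\<close>] by simp
  qed (use \<open>t0 \<in> I\<close> \<open>t \<in> I\<close> \<open>x t0 \<in> {z. \<phi> z = 0}\<close> in auto)
  then show "x t \<in> {z. \<phi> z = 0}" by simp
qed

lemma sigma_component_sign:
  fixes s r y y0 a h :: real
  assumes "0 \<le> s" "\<bar>s\<bar> \<le> 1/2" "\<bar>r\<bar> \<le> 1/2" "\<bar>h\<bar> < 1/2" and same_side: "0 < (a - y) * (a - y0)"
  shows "0 \<le> (a - y0) * (s * (-2 + r * s + r^2) * (y - a) * (1 + h))"
proof -
  have "r * s \<le> 1/2 * (1/2)" "r * r \<le> 1/2 * (1/2)"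
    using assms abs_mult[of r s] abs_mult[of r r] mult_mono[of "\<bar>r\<bar>" "1/2" "\<bar>s\<bar>" "1/2"]
      mult_mono[of "\<bar>r\<bar>" "1/2" "\<bar>r\<bar>" "1/2"] abs_ge_self[of "r * s"] abs_ge_self[of "r * r"]
    by linarith+
  then have "0 < 2 - r * s - r^2" "0 < 1 + h"
    using \<open>\<bar>h\<bar> < 1/2\<close> by (simp_all add: power2_eq_square abs_less_iff)
  then have "0 \<le> s * (2 - r * s - r^2) * (1 + h) * ((a - y) * (a - y0))"
    using \<open>0 \<le> s\<close> same_side by simp
  also have "\<dots> = (a - y0) * (s * (-2 + r * s + r^2) * (y - a) * (1 + h))"
    by (simp add: algebra_simps)
  finally show ?thesis .
qed

lemma continuous_on_small_near_zero:
  fixes h :: "'a::metric_space \<Rightarrow> real"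
  assumes "continuous_on UNIV h" and "h p = 0" and "0 < \<epsilon>"
  obtains d where "0 < d" and "\<And>z. z \<in> ball p d \<Longrightarrow> \<bar>h z\<bar> < \<epsilon>"
  using assms unfolding continuous_on_iff dist_real_def mem_ball
  by (metis UNIV_I diff_zero dist_commute)

lemma same_side_if_close:
  fixes y y0 a :: real
  assumes "\<bar>y - y0\<bar> < \<bar>y0 - a\<bar>"
  shows "0 < (a - y) * (a - y0)"
proof (cases "y0 < a")
  case True
  then have "0 < a - y" "0 < a - y0"
    using assms by (simp_all add: abs_less_iff)
  then show ?thesis by simp
next
  case False
  then have "a - y < 0" "a - y0 < 0"
    using assms by (auto simp: abs_less_iff)
  then show ?thesis by (simp add: mult_neg_neg)
qed

lemma vf_simps:
  "vf \<xi> \<alpha> h1 h2 h3 (s, y, r) =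
     (s * (-2 + r * s + r^2) * (y - \<alpha> / \<xi>) * (1 + h1 (s, y, r)),
      s + y * r * s * (y - \<alpha> / \<xi>) * (1 + h2 (s, y, r)),
      r * (2 - r * s) * (y - \<alpha> / \<xi>) * (1 + h3 (s, y, r)))"
  by (simp add: vf_def)

lemma vf_invariant_planes:
  assumes "continuous_on UNIV h1" and "continuous_on UNIV h3"
  shows "invariant_in (vf \<xi> \<alpha> h1 h2 h3) D {(s, y, r). r = 0}"
    and "invariant_in (vf \<xi> \<alpha> h1 h2 h3) D {(s, y, r). s = 0}"
proof -
  have "invariant_in (vf \<xi> \<alpha> h1 h2 h3) D {z. snd (snd z) = 0}"
  proof (rule invariant_in_zero_set[where k = "\<lambda>z. (2 - snd (snd z) * fst z) * (fst (snd z) - \<alpha> / \<xi>) * (1 + h3 z)"])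
    show "continuous_on UNIV (\<lambda>z. (2 - snd (snd z) * fst z) * (fst (snd z) - \<alpha> / \<xi>) * (1 + h3 z))"
      by (intro continuous_intros assms)
  qed (auto simp: vf_def bounded_linear_snd_comp[OF bounded_linear_snd])
  moreover have "{(s, y, r). r = 0} = {z :: real \<times> real \<times> real. snd (snd z) = 0}"
    by auto
  ultimately show "invariant_in (vf \<xi> \<alpha> h1 h2 h3) D {(s, y, r). r = 0}"
    by simp
  have "invariant_in (vf \<xi> \<alpha> h1 h2 h3) D {z. fst z = 0}"
  proof (rule invariant_in_zero_set[where k = "\<lambda>z. (-2 + snd (snd z) * fst z + snd (snd z)^2) * (fst (snd z) - \<alpha> / \<xi>) * (1 + h1 z)"])
    show "continuous_on UNIV (\<lambda>z. (-2 + snd (snd z) * fst z + snd (snd z)^2) * (fst (snd z) - \<alpha> / \<xi>) * (1 + h1 z))"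
      by (intro continuous_intros assms)
  qed (auto simp: vf_def bounded_linear_fst)
  moreover have "{(s, y, r). s = 0} = {z :: real \<times> real \<times> real. fst z = 0}"
    by auto
  ultimately show "invariant_in (vf \<xi> \<alpha> h1 h2 h3) D {(s, y, r). s = 0}"
    by simp
qed

lemma vf_near_axis_point:
  fixes \<xi> \<alpha> y0 :: real and h1 h2 h3 :: "real \<times> real \<times> real \<Rightarrow> real"
  assumes h1: "continuous_on UNIV h1" "h1 (0, y0, 0) = 0"
    and h3: "continuous_on UNIV h3" "h3 (0, y0, 0) = 0" and "y0 \<noteq> \<alpha> / \<xi>"
  obtains e where "0 < e"
    and "\<And>s y r. (s, y, r) \<in> ball (0, y0, 0) e \<Longrightarrow> 0 \<le> s \<Longrightarrow>
           0 \<le> (\<alpha> / \<xi> - y0) * fst (vf \<xi> \<alpha> h1 h2 h3 (s, y, r))"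
    and "\<And>r. (0 :: real, y0, r) \<in> ball (0, y0, 0) e \<Longrightarrow> \<bar>h3 (0, y0, r)\<bar> < 1/2"
proof -
  define a where "a = \<alpha> / \<xi>"
  obtain d1 where "0 < d1" and d1: "\<And>z. z \<in> ball (0, y0, 0) d1 \<Longrightarrow> \<bar>h1 z\<bar> < 1/2"
    using continuous_on_small_near_zero[OF h1, of "1/2"] by auto
  obtain d3 where "0 < d3" and d3: "\<And>z. z \<in> ball (0, y0, 0) d3 \<Longrightarrow> \<bar>h3 z\<bar> < 1/2"
    using continuous_on_small_near_zero[OF h3, of "1/2"] by auto
  define e where "e = min (min d1 d3) (min (1/2) \<bar>y0 - a\<bar>)"
  have "0 < e"
    using \<open>0 < d1\<close> \<open>0 < d3\<close> \<open>y0 \<noteq> \<alpha> / \<xi>\<close> by (simp add: e_def a_def)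
  have near: "\<bar>s\<bar> < e \<and> \<bar>y - y0\<bar> < e \<and> \<bar>r\<bar> < e" if "(s, y, r) \<in> ball (0, y0, 0) e" for s y r :: real
    using that dist_fst_le[of "(s, y, r)" "(0, y0, 0)"] dist_snd_le[of "(s, y, r)" "(0, y0, 0)"]
      dist_fst_le[of "(y, r)" "(y0, 0)"] dist_snd_le[of "(y, r)" "(y0, 0)"]
    by (auto simp: dist_real_def dist_commute)
  show ?thesis
  proof (rule that[OF \<open>0 < e\<close>])
    fix s y r :: real assume z: "(s, y, r) \<in> ball (0, y0, 0) e" and "0 \<le> s"
    have "\<bar>y - y0\<bar> < \<bar>y0 - a\<bar>"
      using near[OF z] by (simp add: e_def)
    then have "0 < (a - y) * (a - y0)"
      by (rule same_side_if_close)
    moreover have "\<bar>h1 (s, y, r)\<bar> < 1/2"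
      using z by (intro d1) (simp add: e_def)
    ultimately show "0 \<le> (\<alpha> / \<xi> - y0) * fst (vf \<xi> \<alpha> h1 h2 h3 (s, y, r))"
      using sigma_component_sign[OF \<open>0 \<le> s\<close>] near[OF z] by (simp add: vf_simps a_def e_def)
  next
    fix r :: real assume "(0 :: real, y0, r) \<in> ball (0, y0, 0) e"
    then show "\<bar>h3 (0, y0, r)\<bar> < 1/2"
      by (intro d3) (simp add: e_def)
  qed
qed

lemma vf_stable_set_origin:
  fixes \<xi> \<alpha> :: real and h1 h2 h3 :: "real \<times> real \<times> real \<Rightarrow> real"
  assumes "0 < \<xi>" and "0 < \<alpha>" and h1: "continuous_on UNIV h1" "\<And>s y. h1 (s, y, 0) = 0"
    and h3: "continuous_on UNIV h3" "\<And>s y. h3 (s, y, 0) = 0"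
  shows "\<exists>V. open V \<and> (0, 0, 0) \<in> V \<and>
           stable_set (vf \<xi> \<alpha> h1 h2 h3) (V \<inter> Quad) (0, 0, 0) = {(0, 0, r) | r. r \<ge> 0} \<inter> V"
proof -
  have "0 < \<alpha> / \<xi>"
    using assms by simp
  obtain e where "0 < e"
    and sigma_sign: "\<And>s y r. (s, y, r) \<in> ball (0, 0, 0) e \<Longrightarrow> 0 \<le> s \<Longrightarrow>
                       0 \<le> (\<alpha> / \<xi> - 0) * fst (vf \<xi> \<alpha> h1 h2 h3 (s, y, r))"
    and h3_small: "\<And>r. (0 :: real, 0 :: real, r) \<in> ball (0, 0, 0) e \<Longrightarrow> \<bar>h3 (0, 0, r)\<bar> < 1/2"
    by (rule vf_near_axis_point[of h1 0 h3 \<alpha> \<xi> h2]) (use h1 h3 \<open>0 < \<alpha> / \<xi>\<close> in auto)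
  define V :: "(real \<times> real \<times> real) set" where "V = ball (0, 0, 0) e"
  have "stable_set (vf \<xi> \<alpha> h1 h2 h3) (V \<inter> Quad) (0, 0, 0) \<subseteq> {(0, 0, r) | r. 0 \<le> r} \<inter> (V \<inter> Quad)"
  proof (rule stable_set_subset_ray)
    show "0 \<le> fst (vf \<xi> \<alpha> h1 h2 h3 (s, y, r))" if "(s, y, r) \<in> V \<inter> Quad" for s y r
      using sigma_sign[of s y r] that \<open>0 < \<alpha>\<close> \<open>0 < \<xi>\<close>
      by (simp add: V_def Quad_def zero_le_mult_iff zero_le_divide_iff)
  qed (auto simp: vf_simps)
  moreover have "{(0, 0, r) | r. 0 \<le> r} \<inter> V \<subseteq> stable_set (vf \<xi> \<alpha> h1 h2 h3) (V \<inter> Quad) (0, 0, 0)"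
  proof (rule ray_subset_stable_set[where c = "2 * (\<alpha> / \<xi>)" and g = "\<lambda>r. 1 + h3 (0, 0, r)" and m = "1/2" and M = "3/2"])
    show "continuous_on {0<..} (\<lambda>r. 1 + h3 (0, 0, r))"
      by (intro continuous_intros continuous_on_compose2[OF h3(1)]) auto
    show "1/2 \<le> 1 + h3 (0, 0, r) \<and> 1 + h3 (0, 0, r) \<le> 3/2" if "(0, 0, r) \<in> V" for r
    proof -
      have "\<bar>h3 (0, 0, r)\<bar> < 1/2"
        using h3_small[of r] that by (simp add: V_def)
      then show ?thesis by linarith
    qed
    show "vf \<xi> \<alpha> h1 h2 h3 (0, 0, r) = (0, 0, - (2 * (\<alpha> / \<xi>)) * r * (1 + h3 (0, 0, r)))" for r
      by (simp add: vf_simps algebra_simps)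
  qed (use \<open>0 < e\<close> \<open>0 < \<alpha> / \<xi>\<close> in \<open>simp_all add: V_def\<close>)
  ultimately have "stable_set (vf \<xi> \<alpha> h1 h2 h3) (V \<inter> Quad) (0, 0, 0) = {(0, 0, r) | r. 0 \<le> r} \<inter> V"
    by auto
  then show ?thesis
    using \<open>0 < e\<close> by (intro exI[of _ V]) (simp add: V_def)
qed

lemma vf_unstable_set:
  fixes \<xi> \<alpha> :: real and h1 h2 h3 :: "real \<times> real \<times> real \<Rightarrow> real"
  assumes "0 < \<xi>" and "0 < \<alpha>" and h1: "continuous_on UNIV h1" "\<And>s y. h1 (s, y, 0) = 0"
    and h3: "continuous_on UNIV h3" "\<And>s y. h3 (s, y, 0) = 0"
  shows "\<exists>V. open V \<and> (0, 2 * \<alpha> / \<xi>, 0) \<in> V \<and>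
           unstable_set (vf \<xi> \<alpha> h1 h2 h3) (V \<inter> Quad) (0, 2 * \<alpha> / \<xi>, 0) = {(0, 2 * \<alpha> / \<xi>, r) | r. r \<ge> 0} \<inter> V"
proof -
  define A where "A = 2 * \<alpha> / \<xi>"
  define f where "f z = - vf \<xi> \<alpha> h1 h2 h3 z" for z
  have "0 < \<alpha> / \<xi>" and A_minus: "A - \<alpha> / \<xi> = \<alpha> / \<xi>"
    using assms by (simp_all add: A_def field_simps)
  obtain e where "0 < e"
    and sigma_sign: "\<And>s y r. (s, y, r) \<in> ball (0, A, 0) e \<Longrightarrow> 0 \<le> s \<Longrightarrow>
                       0 \<le> (\<alpha> / \<xi> - A) * fst (vf \<xi> \<alpha> h1 h2 h3 (s, y, r))"
    and h3_small: "\<And>r. (0 :: real, A, r) \<in> ball (0, A, 0) e \<Longrightarrow> \<bar>h3 (0, A, r)\<bar> < 1/2"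
    by (rule vf_near_axis_point[of h1 A h3 \<alpha> \<xi> h2]) (use h1 h3 A_minus \<open>0 < \<alpha> / \<xi>\<close> in auto)
  define V :: "(real \<times> real \<times> real) set" where "V = ball (0, A, 0) e"
  have "stable_set f (V \<inter> Quad) (0, A, 0) \<subseteq> {(0, A, r) | r. 0 \<le> r} \<inter> (V \<inter> Quad)"
  proof (rule stable_set_subset_ray)
    show "0 \<le> fst (f (s, y, r))" if "(s, y, r) \<in> V \<inter> Quad" for s y r
    proof -
      have "0 \<le> - (\<alpha> / \<xi>) * fst (vf \<xi> \<alpha> h1 h2 h3 (s, y, r))"
        using sigma_sign[of s y r] that A_minus by (simp add: V_def Quad_def)
      then show ?thesis
        using \<open>0 < \<alpha>\<close> \<open>0 < \<xi>\<close> by (simp add: f_def mult_le_0_iff divide_le_0_iff)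
    qed
  qed (auto simp: f_def vf_simps)
  moreover have "{(0, A, r) | r. 0 \<le> r} \<inter> V \<subseteq> stable_set f (V \<inter> Quad) (0, A, 0)"
  proof (rule ray_subset_stable_set[where c = "2 * (\<alpha> / \<xi>)" and g = "\<lambda>r. 1 + h3 (0, A, r)" and m = "1/2" and M = "3/2"])
    show "continuous_on {0<..} (\<lambda>r. 1 + h3 (0, A, r))"
      by (intro continuous_intros continuous_on_compose2[OF h3(1)]) auto
    show "1/2 \<le> 1 + h3 (0, A, r) \<and> 1 + h3 (0, A, r) \<le> 3/2" if "(0, A, r) \<in> V" for r
    proof -
      have "\<bar>h3 (0, A, r)\<bar> < 1/2"
        using h3_small[of r] that by (simp add: V_def)
      then show ?thesis by linarith
    qed
    show "f (0, A, r) = (0, 0, - (2 * (\<alpha> / \<xi>)) * r * (1 + h3 (0, A, r)))" for r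
      using A_minus by (simp add: f_def vf_simps algebra_simps)
  qed (use \<open>0 < e\<close> \<open>0 < \<alpha> / \<xi>\<close> in \<open>simp_all add: V_def\<close>)
  ultimately have "unstable_set (vf \<xi> \<alpha> h1 h2 h3) (V \<inter> Quad) (0, A, 0) = {(0, A, r) | r. 0 \<le> r} \<inter> V"
    unfolding unstable_set_eq_stable_set_reflect f_def[abs_def] by auto
  then show ?thesis
    using \<open>0 < e\<close> by (intro exI[of _ V]) (simp add: V_def A_def)
qed

lemma logistic_has_real_derivative:
  fixes A :: real
  shows "((\<lambda>t. A / (1 + exp (- A * t))) has_real_derivative
           A * (A / (1 + exp (- A * t))) - (A / (1 + exp (- A * t)))^2) (at t)"
proof -
  define E where "E = exp (- A * t)"
  have "0 < 1 + E"
    by (simp add: E_def add_pos_pos)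
  have "((\<lambda>t. 1 + exp (- A * t)) has_real_derivative - A * E) (at t)"
    by (auto intro!: derivative_eq_intros simp: E_def)
  then have "((\<lambda>t. A / (1 + exp (- A * t))) has_real_derivative
               (0 * (1 + E) - A * (- A * E)) / ((1 + E) * (1 + E))) (at t)"
    unfolding E_def by (rule DERIV_divide[OF DERIV_const]) (use \<open>0 < 1 + E\<close> E_def in simp)
  moreover have "(0 * (1 + E) - A * (- A * E)) / ((1 + E) * (1 + E)) = A * (A / (1 + E)) - (A / (1 + E))^2"
    using \<open>0 < 1 + E\<close>
    by (simp add: power_divide diff_divide_distrib[symmetric] divide_simps) (simp add: algebra_simps power2_eq_square)
  ultimately show ?thesis
    by (simp add: E_def)
qed

lemma logistic_range:
  fixes A :: real
  assumes "0 < A"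
  shows "range (\<lambda>t. A / (1 + exp (- A * t))) = {0<..<A}"
proof (intro set_eqI iffI)
  fix w assume "w \<in> range (\<lambda>t. A / (1 + exp (- A * t)))"
  then obtain t where w: "w = A / (1 + exp (- A * t))"
    by auto
  have "0 < 1 + exp (- A * t)" "1 < 1 + exp (- A * t)"
    by (simp_all add: add_pos_pos)
  then show "w \<in> {0<..<A}"
    using \<open>0 < A\<close> by (simp add: w divide_less_eq)
next
  fix w assume "w \<in> {0<..<A}"
  define t where "t = - ln (A / w - 1) / A"
  have "0 < A / w - 1"
    using \<open>w \<in> {0<..<A}\<close> by (simp add: field_simps)
  then have "exp (- A * t) = A / w - 1"
    using \<open>0 < A\<close> by (simp add: t_def)
  then have "w = A / (1 + exp (- A * t))"
    using \<open>w \<in> {0<..<A}\<close> \<open>0 < A\<close> by simp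
  then show "w \<in> range (\<lambda>t. A / (1 + exp (- A * t)))"
    by (rule range_eqI)
qed

lemma vf_heteroclinic_orbit:
  fixes \<xi> \<alpha> :: real and h1 h2 h3 :: "real \<times> real \<times> real \<Rightarrow> real"
  assumes "0 < \<xi>" and "0 < \<alpha>" and h1: "\<And>s y. h1 (s, y, 0) = 0"
  shows "\<exists>x. is_sol (vf \<xi> \<alpha> h1 h2 h3) x UNIV
            \<and> range x = {(2 * \<alpha> / \<xi> * y - y^2, y, 0) | y. 0 < y \<and> y < 2 * \<alpha> / \<xi>}
            \<and> (x \<longlongrightarrow> (0, 0, 0)) at_bot
            \<and> (x \<longlongrightarrow> (0, 2 * \<alpha> / \<xi>, 0)) at_top"
proof -
  define A where "A = 2 * \<alpha> / \<xi>"
  have "0 < A"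
    using assms by (simp add: A_def)
  define y where "y t = A / (1 + exp (- A * t))" for t
  define x where "x t = (A * y t - (y t)^2, y t, 0 :: real)" for t
  have y_deriv: "(y has_real_derivative A * y t - (y t)^2) (at t)" for t
    unfolding y_def by (rule logistic_has_real_derivative)
  have "is_sol (vf \<xi> \<alpha> h1 h2 h3) x UNIV"
    unfolding is_sol_def
  proof (intro conjI ballI)
    fix t :: real
    have "(x has_vector_derivative ((A - 2 * y t) * (A * y t - (y t)^2), A * y t - (y t)^2, 0)) (at t)"
      unfolding x_def using y_deriv
      by (intro has_vector_derivative_Pair has_vector_derivative_const)
        (auto intro!: derivative_eq_intros simp: has_real_derivative_iff_has_vector_derivative[symmetric]
          algebra_simps power2_eq_square)
    moreover have "vf \<xi> \<alpha> h1 h2 h3 (x t) = ((A - 2 * y t) * (A * y t - (y t)^2), A * y t - (y t)^2, 0)"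
      using \<open>0 < \<xi>\<close> by (simp add: x_def vf_simps h1 A_def field_simps)
    ultimately show "(x has_vector_derivative vf \<xi> \<alpha> h1 h2 h3 (x t)) (at t within UNIV)"
      by simp
  qed simp
  moreover have "range x = {(A * w - w^2, w, 0 :: real) | w. 0 < w \<and> w < A}"
  proof -
    have "range x = (\<lambda>w. (A * w - w^2, w, 0 :: real)) ` range y"
      by (auto simp: x_def)
    also have "\<dots> = {(A * w - w^2, w, 0 :: real) | w. 0 < w \<and> w < A}"
      unfolding y_def logistic_range[OF \<open>0 < A\<close>] by auto
    finally show ?thesis .
  qed
  moreover have "(x \<longlongrightarrow> (0, 0, 0)) at_bot"
  proof -
    have "(y \<longlongrightarrow> 0) at_bot"
      unfolding y_def using \<open>0 < A\<close> by real_asymp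
    then have "(x \<longlongrightarrow> (A * 0 - 0^2, 0, 0)) at_bot"
      unfolding x_def by (intro tendsto_intros)
    then show ?thesis by simp
  qed
  moreover have "(x \<longlongrightarrow> (0, A, 0)) at_top"
  proof -
    have "(y \<longlongrightarrow> A) at_top"
      unfolding y_def using \<open>0 < A\<close> by real_asymp
    then have "(x \<longlongrightarrow> (A * A - A^2, A, 0)) at_top"
      unfolding x_def by (intro tendsto_intros)
    then show ?thesis by (simp add: power2_eq_square)
  qed
  ultimately show ?thesis
    unfolding A_def by blast
qed

theorem lemma5:
  fixes \<xi> \<alpha> :: real and h1 h2 h3 :: "real \<times> real \<times> real \<Rightarrow> real"
  assumes "\<xi> > 0" and "\<alpha> > 0"
    and "smooth_fun h1" and "smooth_fun h2" and "smooth_fun h3"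
    and "\<And>s y. h1 (s, y, 0) = 0" and "\<And>s y. h2 (s, y, 0) = 0" and "\<And>s y. h3 (s, y, 0) = 0"
  defines "f \<equiv> vf \<xi> \<alpha> h1 h2 h3"
  shows "invariant_in f Quad {(s, y, r). r = 0}
       \<and> invariant_in f Quad {(s, y, r). s = 0}
       \<and> (\<forall>y. f (0, y, 0) = 0)
       \<and> (\<exists>V. open V \<and> (0, 0, 0) \<in> V \<and>
            stable_set f (V \<inter> Quad) (0, 0, 0) = {(0, 0, r) | r. r \<ge> 0} \<inter> V)
       \<and> (\<exists>x. is_sol f x UNIV
            \<and> range x = {(2 * \<alpha> / \<xi> * y - y^2, y, 0) | y. 0 < y \<and> y < 2 * \<alpha> / \<xi>}
            \<and> (x \<longlongrightarrow> (0, 0, 0)) at_bot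
            \<and> (x \<longlongrightarrow> (0, 2 * \<alpha> / \<xi>, 0)) at_top)
       \<and> (\<exists>V. open V \<and> (0, 2 * \<alpha> / \<xi>, 0) \<in> V \<and>
            unstable_set f (V \<inter> Quad) (0, 2 * \<alpha> / \<xi>, 0) = {(0, 2 * \<alpha> / \<xi>, r) | r. r \<ge> 0} \<inter> V)"
proof -
  have h1: "continuous_on UNIV h1" and h3: "continuous_on UNIV h3"
    using \<open>smooth_fun h1\<close> \<open>smooth_fun h3\<close> unfolding smooth_fun_def by (metis Ck.simps(1))+
  have "\<forall>y. vf \<xi> \<alpha> h1 h2 h3 (0, y, 0) = 0"
    by (simp add: vf_simps zero_prod_def)
  then show ?thesis
    unfolding f_def
    by (intro conjI vf_invariant_planes[OF h1 h3]
        vf_stable_set_origin[OF assms(1,2) h1 assms(6) h3 assms(8)]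
        vf_heteroclinic_orbit[of \<xi> \<alpha> h1 h2 h3, OF assms(1,2,6)]
        vf_unstable_set[OF assms(1,2) h1 assms(6) h3 assms(8)])
qed

end
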